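(* Let $G$ be a group generated by a set $X$, let $p_1,\dots,p_k$ be palindromes in $G$ and $u\in G$. Then: (1) if $q=p_1p_2$, then for every integer $m$ the element $q^m$ is a product of two palindromes; (2) $l_{\mathcal P}([u,p_1p_2\cdots p_k])\le 2k+\varepsilon$, where $\varepsilon=0$ if $k$ is even and $\varepsilon=1$ if $k$ is odd.
   Context: A palindrome in $G=\langle X\rangle$ is an element represented by a reduced word in $X^{\pm1}$ reading the same forwards and backwards; $l_{\mathcal P}(g)$ is the minimal number of palindromes whose product is $g$. The commutator is $[g,h]=g^{-1}h^{-1}gh$. *)

theory Defs
  imports "HOL-Algebra.Algebra"
begin

text \<open>Words over S^{\<pm>1}: a letter is (True, x) for x and (False, x) for x^{-1}.\<close>

definition letter_val :: "('g, 'b) monoid_scheme \<Rightarrow> bool \<times> 'g \<Rightarrow> 'g" where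
  "letter_val G l = (if fst l then snd l else inv\<^bsub>G\<^esub> (snd l))"

definition word_val :: "('g, 'b) monoid_scheme \<Rightarrow> (bool \<times> 'g) list \<Rightarrow> 'g" where
  "word_val G w = foldr (\<lambda>l acc. letter_val G l \<otimes>\<^bsub>G\<^esub> acc) w \<one>\<^bsub>G\<^esub>"

fun reduced_word :: "(bool \<times> 'g) list \<Rightarrow> bool" where
  "reduced_word (a # b # w) = (\<not> (snd a = snd b \<and> fst a \<noteq> fst b) \<and> reduced_word (b # w))"
| "reduced_word _ = True"

definition palindromes :: "('g, 'b) monoid_scheme \<Rightarrow> 'g set \<Rightarrow> 'g set" where
  "palindromes G S = {g. \<exists>w. set (map snd w) \<subseteq> S \<and> reduced_word w \<and> rev w = w \<and> word_val G w = g}"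

definition list_prod :: "('g, 'b) monoid_scheme \<Rightarrow> 'g list \<Rightarrow> 'g" where
  "list_prod G ps = foldr (\<lambda>p acc. p \<otimes>\<^bsub>G\<^esub> acc) ps \<one>\<^bsub>G\<^esub>"

definition pal_length :: "('g, 'b) monoid_scheme \<Rightarrow> 'g set \<Rightarrow> 'g \<Rightarrow> nat" where
  "pal_length G S g = (LEAST n. \<exists>ps. length ps = n \<and> set ps \<subseteq> palindromes G S \<and> list_prod G ps = g)"

definition commutator :: "('g, 'b) monoid_scheme \<Rightarrow> 'g \<Rightarrow> 'g \<Rightarrow> 'g" where
  "commutator G g h = inv\<^bsub>G\<^esub> g \<otimes>\<^bsub>G\<^esub> inv\<^bsub>G\<^esub> h \<otimes>\<^bsub>G\<^esub> g \<otimes>\<^bsub>G\<^esub> h"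

end

theory Submission
  imports Defs
begin

text \<open>For palindromes \<open>p\<^sub>1, p\<^sub>2\<close> the element \<open>(p\<^sub>1p\<^sub>2)\<^sup>n p\<^sub>1 = p\<^sub>1 ((p\<^sub>2p\<^sub>1)\<^sup>n\<^sup>-\<^sup>1 p\<^sub>2) p\<^sub>1\<close>
  is a palindrome by induction on \<open>n\<close>, so \<open>(p\<^sub>1p\<^sub>2)\<^sup>n\<^sup>+\<^sup>1 = ((p\<^sub>1p\<^sub>2)\<^sup>n p\<^sub>1) p\<^sub>2\<close>; negative powers
  are powers of \<open>p\<^sub>2\<^sup>-\<^sup>1 p\<^sub>1\<^sup>-\<^sup>1\<close>, again a product of two palindromes.
  For the commutator write \<open>[u, P] = (u\<^sup>-\<^sup>1 P\<^sup>-\<^sup>1 u) P\<close>, where \<open>P\<^sup>-\<^sup>1\<close> is a product of \<open>k\<close>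
  palindromes. Conjugation by \<open>u\<close> turns each pair of adjacent factors into a product of two
  palindromes, and an unpaired last factor costs one extra palindrome.

  Palindromes are defined through reduced words, so the basic tool is that every palindromic
  word, reduced or not, represents a palindrome: reducing \<open>a w a\<close> with \<open>w\<close> a reduced
  palindrome either changes nothing or cancels \<open>a\<close> against both end letters of \<open>w\<close>.\<close>

definition letter_inv :: "bool \<times> 'g \<Rightarrow> bool \<times> 'g" where
  "letter_inv l = (\<not> fst l, snd l)"

definition cancelling :: "bool \<times> 'g \<Rightarrow> bool \<times> 'g \<Rightarrow> bool" where
  "cancelling a b \<longleftrightarrow> snd a = snd b \<and> fst a \<noteq> fst b"

lemma cancelling_sym: "cancelling a b \<longleftrightarrow> cancelling b a"
  by (auto simp: cancelling_def)

lemma palindrome_cases: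
  assumes "rev w = w"
  obtains "w = []" | a where "w = [a]" | a v where "w = a # v @ [a]" "rev v = v"
proof (cases w)
  case Nil
  then show ?thesis by (rule that(1))
next
  case (Cons a t)
  show ?thesis
  proof (cases t rule: rev_cases)
    case Nil
    with Cons show ?thesis by (intro that(2)) simp
  next
    case (snoc v b)
    have "b # (rev v @ [a]) = rev (a # v @ [b])"
      by simp
    also have "\<dots> = a # (v @ [b])"
      using assms unfolding Cons snoc .
    finally have "b = a \<and> rev v = v"
      unfolding list.inject append1_eq_conv by blast
    with Cons snoc show ?thesis
      by (metis that(3))
  qed
qed

lemma reduced_word_Cons:
  "reduced_word v \<Longrightarrow> v = [] \<or> \<not> cancelling a (hd v) \<Longrightarrow> reduced_word (a # v)"
  by (cases v) (auto simp: cancelling_def)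

lemma reduced_word_snoc:
  "reduced_word v \<Longrightarrow> v = [] \<or> \<not> cancelling (last v) a \<Longrightarrow> reduced_word (v @ [a])"
proof (induction v rule: reduced_word.induct)
  case (1 x y w)
  then show ?case by (cases w) auto
qed (auto simp: cancelling_def)

lemma reduced_word_appendD: "reduced_word (x @ y) \<Longrightarrow> reduced_word x \<and> reduced_word y"
proof (induction x rule: reduced_word.induct)
  case ("2_2" v)
  then show ?case by (cases y) auto
qed auto

context group
begin

lemma letter_val_closed: "snd l \<in> carrier G \<Longrightarrow> letter_val G l \<in> carrier G"
  by (simp add: letter_val_def)

lemma word_val_Nil [simp]: "word_val G [] = \<one>"
  by (simp add: word_val_def)

lemma word_val_Cons: "word_val G (a # w) = letter_val G a \<otimes> word_val G w"
  by (simp add: word_val_def)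

lemma word_val_closed: "set (map snd w) \<subseteq> carrier G \<Longrightarrow> word_val G w \<in> carrier G"
  by (induction w) (auto simp: word_val_Cons letter_val_closed)

lemma word_val_append:
  "set (map snd x) \<subseteq> carrier G \<Longrightarrow> set (map snd y) \<subseteq> carrier G \<Longrightarrow>
   word_val G (x @ y) = word_val G x \<otimes> word_val G y"
  by (induction x) (auto simp: word_val_Cons m_assoc letter_val_closed word_val_closed)

lemma word_val_singleton: "snd a \<in> carrier G \<Longrightarrow> word_val G [a] = letter_val G a"
  by (simp add: word_val_Cons letter_val_closed)

lemma letter_val_cancelling:
  "cancelling a b \<Longrightarrow> snd a \<in> carrier G \<Longrightarrow> letter_val G a \<otimes> letter_val G b = \<one>"
  by (auto simp: cancelling_def letter_val_def)

lemma word_val_letter_inv_rev: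
  "set (map snd w) \<subseteq> carrier G \<Longrightarrow> word_val G (map letter_inv (rev w)) = inv (word_val G w)"
proof (induction w)
  case (Cons a w)
  then have a: "snd a \<in> carrier G" and w: "set (map snd w) \<subseteq> carrier G" by auto
  have "word_val G (map letter_inv (rev (a # w)))
      = word_val G (map letter_inv (rev w)) \<otimes> word_val G [letter_inv a]"
    using a w by (simp add: word_val_append letter_inv_def)
  also have "\<dots> = inv (word_val G w) \<otimes> inv (letter_val G a)"
  proof -
    have "word_val G [letter_inv a] = inv (letter_val G a)"
      using a by (simp add: word_val_singleton letter_inv_def letter_val_def)
    with Cons.IH[OF w] show ?thesis by simp
  qed
  also have "\<dots> = inv (word_val G (a # w))"
    using a w by (simp add: word_val_Cons inv_mult_group letter_val_closed word_val_closed)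
  finally show ?case .
qed simp

lemma palindromesE:
  assumes "p \<in> palindromes G S"
  obtains w where "set (map snd w) \<subseteq> S" "reduced_word w" "rev w = w" "word_val G w = p"
  using assms unfolding palindromes_def by blast

lemma letter_sandwich_in_palindromes:
  assumes S: "S \<subseteq> carrier G" and a: "snd a \<in> S" and p: "p \<in> palindromes G S"
  shows "letter_val G a \<otimes> p \<otimes> letter_val G a \<in> palindromes G S"
proof -
  obtain v where vS: "set (map snd v) \<subseteq> S" and red: "reduced_word v" and pal: "rev v = v"
    and p_def: "word_val G v = p"
    using p by (rule palindromesE)
  have aG: "snd a \<in> carrier G" and vG: "set (map snd v) \<subseteq> carrier G"
    using S a vS by auto
  have pG: "p \<in> carrier G"
    using vG p_def word_val_closed by blast
  show ?thesis
  proof (cases "v \<noteq> [] \<and> cancelling a (hd v)")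
    case False
    have "reduced_word (a # v @ [a])"
    proof (cases "v = []")
      case False
      moreover have "last v = hd v"
        using pal by (metis hd_rev)
      moreover have "\<not> cancelling (hd v) a"
        using \<open>\<not> (v \<noteq> [] \<and> cancelling a (hd v))\<close> False cancelling_sym by blast
      ultimately show ?thesis
        using \<open>\<not> (v \<noteq> [] \<and> cancelling a (hd v))\<close> red
        by (intro reduced_word_Cons reduced_word_snoc) auto
    qed (simp add: cancelling_def)
    moreover have "word_val G (a # v @ [a]) = letter_val G a \<otimes> p \<otimes> letter_val G a"
      using aG vG pG p_def
      by (simp add: word_val_Cons word_val_append word_val_singleton m_assoc letter_val_closed)
    ultimately show ?thesis
      using a vS pal unfolding palindromes_def by (intro CollectI exI[of _ "a # v @ [a]"]) auto
  next
    case True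
    then obtain b where b: "hd v = b" and ab: "cancelling a b" by blast
    have bG: "snd b \<in> carrier G"
      using ab aG by (simp add: cancelling_def)
    have ab_one: "letter_val G a \<otimes> letter_val G b = \<one>"
      and ba_one: "letter_val G b \<otimes> letter_val G a = \<one>"
      using ab aG bG letter_val_cancelling cancelling_sym by blast+
    from pal show ?thesis
    proof (cases rule: palindrome_cases)
      case 2
      then have "letter_val G a \<otimes> p \<otimes> letter_val G a = letter_val G a"
        using b p_def aG bG ab_one by (simp add: word_val_singleton letter_val_closed)
      then show ?thesis
        using a red unfolding palindromes_def
        by (intro CollectI exI[of _ "[a]"]) (auto simp: word_val_singleton aG)
    next
      case (3 c v')
      then have v: "v = b # v' @ [b]" using b by simp
      have v'G: "set (map snd v') \<subseteq> carrier G" using vG v by auto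
      have "letter_val G a \<otimes> p \<otimes> letter_val G a
          = (letter_val G a \<otimes> letter_val G b) \<otimes> word_val G v' \<otimes> (letter_val G b \<otimes> letter_val G a)"
        using aG bG v'G p_def[symmetric] v
        by (simp add: word_val_Cons word_val_append word_val_singleton m_assoc
            letter_val_closed word_val_closed)
      also have "\<dots> = word_val G v'"
        using ab_one ba_one v'G by (simp add: word_val_closed)
      finally have "letter_val G a \<otimes> p \<otimes> letter_val G a = word_val G v'" .
      moreover have "reduced_word v'"
        using red v reduced_word_appendD[of "[b]" "v' @ [b]"] reduced_word_appendD[of v' "[b]"]
        by auto
      ultimately show ?thesis
        using vS v 3(2) unfolding palindromes_def by (intro CollectI exI[of _ v']) auto
    qed (use True in simp)
  qed
qed

lemma palindromic_word_in_palindromes: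
  assumes S: "S \<subseteq> carrier G"
  shows "rev w = w \<Longrightarrow> set (map snd w) \<subseteq> S \<Longrightarrow> word_val G w \<in> palindromes G S"
proof (induction "length w" arbitrary: w rule: less_induct)
  case less
  from less.prems(1) show ?case
  proof (cases rule: palindrome_cases)
    case 1
    then show ?thesis
      unfolding palindromes_def by (intro CollectI exI[of _ "[]"]) simp
  next
    case (2 a)
    then show ?thesis
      using less.prems(2) unfolding palindromes_def by (intro CollectI exI[of _ "[a]"]) simp
  next
    case (3 a v)
    have aS: "snd a \<in> S" and vS: "set (map snd v) \<subseteq> S"
      using 3(1) less.prems(2) by auto
    have "word_val G v \<in> palindromes G S"
      using less.hyps[of v] 3 vS by simp
    moreover have "word_val G w = letter_val G a \<otimes> word_val G v \<otimes> letter_val G a"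
    proof -
      have "snd a \<in> carrier G" "set (map snd v) \<subseteq> carrier G"
        using aS vS S by auto
      then show ?thesis
        using 3(1) by (simp add: word_val_Cons word_val_append word_val_singleton m_assoc
            letter_val_closed word_val_closed)
    qed
    ultimately show ?thesis
      using letter_sandwich_in_palindromes[OF S aS] by simp
  qed
qed

lemma palindromes_closed: "S \<subseteq> carrier G \<Longrightarrow> p \<in> palindromes G S \<Longrightarrow> p \<in> carrier G"
  by (metis palindromesE subset_trans word_val_closed)

lemma one_in_palindromes: "S \<subseteq> carrier G \<Longrightarrow> \<one> \<in> palindromes G S"
  using palindromic_word_in_palindromes[of S "[]"] by simp

lemma palindromes_inv_closed:
  assumes S: "S \<subseteq> carrier G" and p: "p \<in> palindromes G S"
  shows "inv p \<in> palindromes G S"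
proof -
  obtain w where wS: "set (map snd w) \<subseteq> S" and pal: "rev w = w" and p_def: "word_val G w = p"
    using p by (rule palindromesE)
  have "word_val G (map letter_inv w) = inv p"
    using word_val_letter_inv_rev[of w] wS S pal p_def by auto
  moreover have "word_val G (map letter_inv w) \<in> palindromes G S"
    using wS pal S
    by (intro palindromic_word_in_palindromes) (auto simp: rev_map letter_inv_def)
  ultimately show ?thesis by simp
qed

lemma mirror_conj_in_palindromes:
  assumes S: "S \<subseteq> carrier G" and p: "p \<in> palindromes G S" and x: "set (map snd x) \<subseteq> S"
  shows "word_val G (rev x) \<otimes> p \<otimes> word_val G x \<in> palindromes G S"
proof -
  obtain w where wS: "set (map snd w) \<subseteq> S" and pal: "rev w = w" and p_def: "word_val G w = p"
    using p by (rule palindromesE)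
  have "word_val G (rev x @ w @ x) = word_val G (rev x) \<otimes> p \<otimes> word_val G x"
  proof -
    have "set (map snd w) \<subseteq> carrier G" "set (map snd x) \<subseteq> carrier G"
      "set (map snd (rev x)) \<subseteq> carrier G"
      using wS x S by auto
    moreover have "p \<in> carrier G"
      using calculation(1) p_def word_val_closed by blast
    ultimately show ?thesis
      using p_def by (simp add: word_val_append m_assoc word_val_closed del: set_map)
  qed
  moreover have "word_val G (rev x @ w @ x) \<in> palindromes G S"
    using wS x pal S by (intro palindromic_word_in_palindromes) auto
  ultimately show ?thesis by simp
qed

lemma inv_mirror_conj_in_palindromes:
  assumes S: "S \<subseteq> carrier G" and p: "p \<in> palindromes G S" and x: "set (map snd x) \<subseteq> S"
  shows "inv (word_val G x) \<otimes> p \<otimes> inv (word_val G (rev x)) \<in> palindromes G S"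
proof -
  have xG: "set (map snd x) \<subseteq> carrier G" using x S by auto
  have "set (map snd (map letter_inv x)) \<subseteq> S"
    using x by (simp add: letter_inv_def comp_def)
  then have "word_val G (rev (map letter_inv x)) \<otimes> p \<otimes> word_val G (map letter_inv x)
      \<in> palindromes G S"
    by (rule mirror_conj_in_palindromes[OF S p])
  moreover have "word_val G (rev (map letter_inv x)) = inv (word_val G x)"
    using word_val_letter_inv_rev[OF xG] by (simp add: rev_map)
  moreover have "word_val G (map letter_inv x) = inv (word_val G (rev x))"
    using word_val_letter_inv_rev[of "rev x"] xG by simp
  ultimately show ?thesis by simp
qed

lemma palindromes_sandwich_closed:
  assumes S: "S \<subseteq> carrier G" and p: "p \<in> palindromes G S" and r: "r \<in> palindromes G S"
  shows "p \<otimes> r \<otimes> p \<in> palindromes G S"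
proof -
  obtain w where wS: "set (map snd w) \<subseteq> S" and pal: "rev w = w" and p_def: "word_val G w = p"
    using p by (rule palindromesE)
  show ?thesis
    using mirror_conj_in_palindromes[OF S r wS] pal p_def by simp
qed

lemma nat_pow_mult_shift:
  "x \<in> carrier G \<Longrightarrow> y \<in> carrier G \<Longrightarrow> (x \<otimes> y) [^] (k::nat) \<otimes> x = x \<otimes> (y \<otimes> x) [^] k"
proof (induction k)
  case (Suc k)
  have "(x \<otimes> y) [^] Suc k \<otimes> x = ((x \<otimes> y) [^] k \<otimes> x) \<otimes> (y \<otimes> x)"
    using Suc.prems by (simp add: m_assoc)
  also have "\<dots> = x \<otimes> (y \<otimes> x) [^] k \<otimes> (y \<otimes> x)"
    by (simp only: Suc.IH[OF Suc.prems])
  also have "\<dots> = x \<otimes> (y \<otimes> x) [^] Suc k"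
    using Suc.prems by (simp add: m_assoc)
  finally show ?case .
qed simp

lemma alternating_product_in_palindromes:
  assumes S: "S \<subseteq> carrier G"
  shows "p \<in> palindromes G S \<Longrightarrow> q \<in> palindromes G S \<Longrightarrow> (p \<otimes> q) [^] (k::nat) \<otimes> p \<in> palindromes G S"
proof (induction k arbitrary: p q)
  case 0
  then show ?case using palindromes_closed[OF S] by simp
next
  case (Suc k)
  have pG: "p \<in> carrier G" and qG: "q \<in> carrier G"
    using Suc.prems palindromes_closed[OF S] by auto
  have "(p \<otimes> q) [^] Suc k \<otimes> p = ((p \<otimes> q) [^] k \<otimes> p) \<otimes> (q \<otimes> p)"
    using pG qG by (simp add: m_assoc)
  also have "\<dots> = (p \<otimes> (q \<otimes> p) [^] k) \<otimes> (q \<otimes> p)"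
    by (simp only: nat_pow_mult_shift[OF pG qG])
  also have "\<dots> = p \<otimes> ((q \<otimes> p) [^] k \<otimes> q) \<otimes> p"
    using pG qG by (simp add: m_assoc)
  finally have "(p \<otimes> q) [^] Suc k \<otimes> p = p \<otimes> ((q \<otimes> p) [^] k \<otimes> q) \<otimes> p" .
  then show ?case
    using palindromes_sandwich_closed[OF S] Suc by simp
qed

lemma nat_pow_product_of_two_palindromes:
  assumes S: "S \<subseteq> carrier G" and p: "p \<in> palindromes G S" and q: "q \<in> palindromes G S"
  shows "\<exists>a \<in> palindromes G S. \<exists>b \<in> palindromes G S. (p \<otimes> q) [^] (n::nat) = a \<otimes> b"
proof (cases n)
  case 0
  then show ?thesis using one_in_palindromes[OF S] by force
next
  case (Suc k)
  then have "(p \<otimes> q) [^] n = ((p \<otimes> q) [^] k \<otimes> p) \<otimes> q"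
    using p q palindromes_closed[OF S] by (simp add: m_assoc)
  then show ?thesis
    using alternating_product_in_palindromes[OF S p q] q by blast
qed

lemma int_pow_product_of_two_palindromes:
  assumes S: "S \<subseteq> carrier G" and p: "p \<in> palindromes G S" and q: "q \<in> palindromes G S"
  shows "\<exists>a \<in> palindromes G S. \<exists>b \<in> palindromes G S. (p \<otimes> q) [^] (m::int) = a \<otimes> b"
proof (cases m rule: int_cases2)
  case (nonneg n)
  then show ?thesis
    using nat_pow_product_of_two_palindromes[OF S p q] by (simp add: int_pow_int)
next
  case (nonpos n)
  have pG: "p \<in> carrier G" and qG: "q \<in> carrier G"
    using p q palindromes_closed[OF S] by auto
  have "(p \<otimes> q) [^] m = inv ((p \<otimes> q) [^] n)"
    using nonpos pG qG by (simp add: int_pow_neg_int)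
  also have "\<dots> = (inv q \<otimes> inv p) [^] n"
    using pG qG by (simp add: nat_pow_inv[symmetric] inv_mult_group del: nat_pow_inv)
  finally show ?thesis
    using nat_pow_product_of_two_palindromes[OF S palindromes_inv_closed[OF S q]
        palindromes_inv_closed[OF S p]] by simp
qed

lemma generate_word_val:
  assumes S: "S \<subseteq> carrier G"
  shows "g \<in> generate G S \<Longrightarrow> \<exists>x. set (map snd x) \<subseteq> S \<and> word_val G x = g"
proof (induction rule: generate.induct)
  case one
  then show ?case by (intro exI[of _ "[]"]) simp
next
  case (incl h)
  then show ?case using S by (intro exI[of _ "[(True, h)]"]) (auto simp: word_val_Cons letter_val_def)
next
  case (inv h)
  then show ?case using S by (intro exI[of _ "[(False, h)]"]) (auto simp: word_val_Cons letter_val_def)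
next
  case (eng h1 h2)
  then obtain x y where "set (map snd x) \<subseteq> S" "word_val G x = h1"
    and "set (map snd y) \<subseteq> S" "word_val G y = h2" by blast
  then show ?case
    using S by (intro exI[of _ "x @ y"]) (auto simp: word_val_append)
qed

lemma inv_mult_cancel_left: "x \<in> carrier G \<Longrightarrow> y \<in> carrier G \<Longrightarrow> inv x \<otimes> (x \<otimes> y) = y"
  by (simp add: m_assoc[symmetric])

lemma mult_inv_cancel_left: "x \<in> carrier G \<Longrightarrow> y \<in> carrier G \<Longrightarrow> x \<otimes> (inv x \<otimes> y) = y"
  by (simp add: m_assoc[symmetric])

lemma list_prod_Nil [simp]: "list_prod G [] = \<one>"
  by (simp add: list_prod_def)

lemma list_prod_Cons [simp]: "list_prod G (a # l) = a \<otimes> list_prod G l"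
  by (simp add: list_prod_def)

lemma list_prod_closed: "set l \<subseteq> carrier G \<Longrightarrow> list_prod G l \<in> carrier G"
  by (induction l) auto

lemma list_prod_append:
  "set l \<subseteq> carrier G \<Longrightarrow> set l' \<subseteq> carrier G \<Longrightarrow>
   list_prod G (l @ l') = list_prod G l \<otimes> list_prod G l'"
  by (induction l) (auto simp: m_assoc list_prod_closed)

lemma inv_list_prod:
  "set l \<subseteq> carrier G \<Longrightarrow> inv (list_prod G l) = list_prod G (rev (map (\<lambda>y. inv y) l))"
proof (induction l)
  case (Cons a l)
  then have a: "a \<in> carrier G" and l: "set l \<subseteq> carrier G" by auto
  have "inv (list_prod G (a # l)) = list_prod G (rev (map (\<lambda>y. inv y) l)) \<otimes> list_prod G [inv a]"
    using Cons.IH[OF l] a l by (simp add: inv_mult_group list_prod_closed)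
  also have "\<dots> = list_prod G (rev (map (\<lambda>y. inv y) (a # l)))"
  proof -
    have "set (rev (map (\<lambda>y. inv y) l)) \<subseteq> carrier G"
      using l by auto
    then show ?thesis
      using a list_prod_append[of "rev (map (\<lambda>y. inv y) l)" "[inv a]"] by simp
  qed
  finally show ?case .
qed simp

text \<open>If \<open>u\<close> and \<open>v\<close> are the values of the word \<open>x\<close> and of its reversal, then
  \<open>u\<inverse> a b u = (u\<inverse> a v\<inverse>) (v b u)\<close> is a product of two palindromes; an unpaired last
  factor costs the extra palindrome \<open>v u\<close>.\<close>
lemma conj_list_prod_palindromes:
  assumes S: "S \<subseteq> carrier G" and x: "set (map snd x) \<subseteq> S"
  shows "set as \<subseteq> palindromes G S \<Longrightarrow> \<exists>qs. set qs \<subseteq> palindromes G S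
    \<and> length qs = length as + (if even (length as) then 0 else 1)
    \<and> list_prod G qs = inv (word_val G x) \<otimes> list_prod G as \<otimes> word_val G x"
proof (induction as rule: induct_list012)
  have u: "word_val G x \<in> carrier G" and u': "word_val G (rev x) \<in> carrier G"
    using x S word_val_closed[of x] word_val_closed[of "rev x"] by auto
  {
    case 1
    then show ?case using u by (intro exI[of _ "[]"]) simp
  next
    case (2 a)
    then have a: "a \<in> palindromes G S" and aG: "a \<in> carrier G"
      using palindromes_closed[OF S] by auto
    let ?qs = "[inv (word_val G x) \<otimes> a \<otimes> inv (word_val G (rev x)),
                word_val G (rev x) \<otimes> word_val G x]"
    have "list_prod G ?qs = inv (word_val G x) \<otimes> list_prod G [a] \<otimes> word_val G x"
      using u u' aG by (simp add: m_assoc inv_mult_cancel_left)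
    moreover have "set ?qs \<subseteq> palindromes G S"
      using inv_mirror_conj_in_palindromes[OF S a x]
        mirror_conj_in_palindromes[OF S one_in_palindromes[OF S] x] u' by simp
    ultimately show ?case by (intro exI[of _ ?qs]) auto
  next
    case (3 a b as)
    then have a: "a \<in> palindromes G S" and b: "b \<in> palindromes G S"
      and as: "set as \<subseteq> palindromes G S"
      by auto
    have aG: "a \<in> carrier G" and bG: "b \<in> carrier G" and asG: "set as \<subseteq> carrier G"
      using a b as palindromes_closed[OF S] by auto
    obtain qs where qs: "set qs \<subseteq> palindromes G S"
      "length qs = length as + (if even (length as) then 0 else 1)"
      "list_prod G qs = inv (word_val G x) \<otimes> list_prod G as \<otimes> word_val G x"
      using "3.IH" as by blast
    let ?qs = "(inv (word_val G x) \<otimes> a \<otimes> inv (word_val G (rev x)))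
               # (word_val G (rev x) \<otimes> b \<otimes> word_val G x) # qs"
    have "list_prod G ?qs = inv (word_val G x) \<otimes> list_prod G (a # b # as) \<otimes> word_val G x"
      using u u' aG bG qs(3) list_prod_closed[OF asG]
      by (simp add: m_assoc inv_mult_cancel_left mult_inv_cancel_left)
    moreover have "set ?qs \<subseteq> palindromes G S"
      using inv_mirror_conj_in_palindromes[OF S a x] mirror_conj_in_palindromes[OF S b x] qs(1)
      by simp
    ultimately show ?case
      using qs(2) by (intro exI[of _ ?qs]) simp
  }
qed

lemma pal_length_commutator_le:
  assumes S: "S \<subseteq> carrier G" and gen: "generate G S = carrier G"
    and ps: "set ps \<subseteq> palindromes G S" and u: "u \<in> carrier G"
  shows "pal_length G S (commutator G u (list_prod G ps))
           \<le> 2 * length ps + (if even (length ps) then 0 else 1)"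
proof -
  obtain x where x: "set (map snd x) \<subseteq> S" and u_def: "word_val G x = u"
    using generate_word_val[OF S] gen u by blast
  have psG: "set ps \<subseteq> carrier G"
    using ps palindromes_closed[OF S] by auto
  have "set (rev (map (\<lambda>y. inv y) ps)) \<subseteq> palindromes G S"
    using ps palindromes_inv_closed[OF S] by auto
  from conj_list_prod_palindromes[OF S x this] obtain qs where qs: "set qs \<subseteq> palindromes G S"
    "length qs = length ps + (if even (length ps) then 0 else 1)"
    "list_prod G qs = inv u \<otimes> inv (list_prod G ps) \<otimes> u"
    by (auto simp: u_def inv_list_prod[OF psG])
  have "set qs \<subseteq> carrier G"
    using qs(1) palindromes_closed[OF S] by auto
  then have "list_prod G (qs @ ps) = commutator G u (list_prod G ps)"
    using qs(3) psG by (simp add: list_prod_append commutator_def)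
  moreover have "set (qs @ ps) \<subseteq> palindromes G S"
    using qs(1) ps by simp
  ultimately have "pal_length G S (commutator G u (list_prod G ps)) \<le> length (qs @ ps)"
    unfolding pal_length_def by (intro Least_le) blast
  then show ?thesis
    using qs(2) by simp
qed

end

theorem lemma2p5:
  fixes G :: "('g, 'b) monoid_scheme" and S :: "'g set"
    and ps :: "'g list" and u p1 p2 :: 'g
  assumes "group G"
    and "S \<subseteq> carrier G"
    and "generate G S = carrier G"
    and "p1 \<in> palindromes G S" and "p2 \<in> palindromes G S"
    and "set ps \<subseteq> palindromes G S"
    and "u \<in> carrier G"
  shows "(\<forall>m::int. \<exists>a \<in> palindromes G S. \<exists>b \<in> palindromes G S.
            (p1 \<otimes>\<^bsub>G\<^esub> p2) [^]\<^bsub>G\<^esub> m = a \<otimes>\<^bsub>G\<^esub> b)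
       \<and> pal_length G S (commutator G u (list_prod G ps))
           \<le> 2 * length ps + (if even (length ps) then 0 else 1)"
  using group.int_pow_product_of_two_palindromes[OF assms(1,2,4,5)]
    group.pal_length_commutator_le[OF assms(1,2,3,6,7)]
  by blast

end
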